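(* Let $d\ge1$, $s>0$, $0<a<d$ and $C>0$. Suppose $u$ is an ancient solution of \[ \partial_tu=-\Lambda^su,\qquad (t,x)\in(-\infty,0]\times\mathbb R^d, \] satisfying $|u(t,x)|\le C|x|^{-a}$ for all $(t,x)\in(-\infty,0]\times\mathbb R^d$. Then $u\equiv0$.
   Context: $\Lambda^s=(-\Delta)^{s/2}$ is the Fourier multiplier $|\xi|^s$ on $\mathbb R^d$ (Fourier transform $\widehat f(\xi)=\int f(x)e^{-i\xi\cdot x}dx$). An ancient solution is a solution defined for all times $t\in(-\infty,0]$; it is understood in the sense that $u(t_0)=e^{-(t_0-t)\Lambda^s}u(t)$ for all $t<t_0\le0$, where $e^{-\tau\Lambda^s}$ is the Fourier multiplier $e^{-\tau|\xi|^s}$. *)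

theory Defs
  imports "HOL-Analysis.Analysis"
begin

text \<open>Convolution kernel of the Fourier multiplier exp(-tau |xi|^s) on R^d, d = CARD('n):
  the inverse Fourier transform (2 pi)^(-d) \<integral> exp(-tau |xi|^s) e^(i xi.x) d xi,
  matching the convention  hat f(xi) = \<integral> f(x) e^(-i xi.x) dx.\<close>
definition frac_kernel :: "real \<Rightarrow> real \<Rightarrow> real ^ 'n \<Rightarrow> complex" where
  "frac_kernel s \<tau> x =
     complex_of_real (1 / (2 * pi) ^ CARD('n)) *
     (LINT \<xi>|lborel. complex_of_real (exp (- \<tau> * (norm \<xi> powr s))) * cis (\<xi> \<bullet> x))"

text \<open>The operator exp(-tau Lambda^s) acting on f, i.e. the Fourier multiplier exp(-tau |xi|^s),
  realised as convolution with its (integrable) kernel.\<close>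
definition frac_semigroup :: "real \<Rightarrow> real \<Rightarrow> (real ^ 'n \<Rightarrow> real) \<Rightarrow> real ^ 'n \<Rightarrow> complex" where
  "frac_semigroup s \<tau> f x = (LINT y|lborel. frac_kernel s \<tau> (x - y) * complex_of_real (f y))"

text \<open>Ancient solution of d_t u = - Lambda^s u on (-inf,0] x R^d:
  u(t0) = exp(-(t0 - t) Lambda^s) u(t) for all t < t0 \<le> 0.\<close>
definition ancient_solution :: "real \<Rightarrow> (real \<Rightarrow> real ^ 'n \<Rightarrow> real) \<Rightarrow> bool" where
  "ancient_solution s u \<longleftrightarrow>
     (\<forall>t\<le>0. u t \<in> borel_measurable lborel) \<and>
     (\<forall>t t0 x. t < t0 \<longrightarrow> t0 \<le> 0 \<longrightarrow>
        complex_of_real (u t0 x) = frac_semigroup s (t0 - t) (u t) x)"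

end

theory Submission
  imports Defs
begin

(* For tau > 0 an ancient solution satisfies u(t0) = K_tau * u(t0 - tau), where the kernel
   K_tau(x) = tau^(-d/s) K_1(tau^(-1/s) x) has sup norm O(tau^(-d/s)) and L1 norm independent of tau.
   Splitting the convolution at |y| = R gives
     |u(t0,x)| <= |K_tau|_inf * C * int_{|y|<R} |y|^(-a) dy + C R^(-a) |K_1|_1,
   and letting first tau and then R tend to infinity yields u = 0.
   The substance is the integrability of K_1, i.e. decay of the Fourier integral of exp(-|xi|^s)
   faster than |w|^(-d). For the step h = pi w / |w|^2, the m-th forward difference of exp(-|xi|^s)
   has Fourier integral (-2)^m times the original one at w, and its L1 norm is O(|h|^p) for every
   p < d + s: near the origin it is O((m|h|)^s) on a ball of volume O(|h|^d), and away from it the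
   m-th directional derivative, of size |xi|^(s-m) near 0 and rapidly decaying at infinity,
   contributes a factor |h|^m. *)

section \<open>Affine changes of variables\<close>

lemma nn_integral_lborel_affine:
  fixes f :: "'a::euclidean_space \<Rightarrow> ennreal" and c :: real
  assumes [measurable]: "f \<in> borel_measurable borel" and c: "c \<noteq> 0"
  shows "(\<integral>\<^sup>+x. f x \<partial>lborel) = ennreal (\<bar>c\<bar> ^ DIM('a)) * (\<integral>\<^sup>+x. f (t + c *\<^sub>R x) \<partial>lborel)"
  by (subst lborel_affine[OF c, of t])
     (simp add: nn_integral_density nn_integral_distr nn_integral_cmult)

lemma lborel_integrable_affine:
  fixes f :: "'a::euclidean_space \<Rightarrow> 'b::{banach, second_countable_topology}"
  assumes f: "integrable lborel f" and c: "c \<noteq> 0"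
  shows "integrable lborel (\<lambda>x. f (t + c *\<^sub>R x))"
  using f f[THEN borel_measurable_integrable] c unfolding integrable_iff_bounded
  by (subst (asm) nn_integral_lborel_affine[where c=c and t=t]) (auto simp: ennreal_mult_less_top)

lemma lborel_integrable_affine_iff:
  fixes f :: "'a::euclidean_space \<Rightarrow> 'b::{banach, second_countable_topology}"
  shows "c \<noteq> 0 \<Longrightarrow> integrable lborel (\<lambda>x. f (t + c *\<^sub>R x)) \<longleftrightarrow> integrable lborel f"
  using lborel_integrable_affine[of f c t]
    lborel_integrable_affine[of "\<lambda>x. f (t + c *\<^sub>R x)" "1/c" "- (1/c) *\<^sub>R t"]
  by (auto simp: algebra_simps)

lemma lborel_integral_affine:
  fixes f :: "'a::euclidean_space \<Rightarrow> 'b::{banach, second_countable_topology}"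
  assumes c: "c \<noteq> 0"
  shows "(\<integral>x. f x \<partial>lborel) = (\<bar>c\<bar> ^ DIM('a)) *\<^sub>R (\<integral>x. f (t + c *\<^sub>R x) \<partial>lborel)"
proof cases
  assume f[measurable]: "integrable lborel f"
  then show ?thesis
    using c f[THEN borel_measurable_integrable] lborel_integrable_affine[OF f c, of t]
    by (subst lborel_affine[OF c, of t]) (simp add: integral_density integral_distr)
next
  assume "\<not> integrable lborel f"
  with c show ?thesis
    by (simp add: lborel_integrable_affine_iff not_integrable_integral_eq)
qed

lemma lborel_integrable_translate:
  fixes f :: "'a::euclidean_space \<Rightarrow> 'b::{banach, second_countable_topology}"
  assumes "integrable lborel f"
  shows "integrable lborel (\<lambda>x. f (x + h))"
  using lborel_integrable_affine[OF assms, of 1 h] by (simp add: add.commute)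

section \<open>Integrability of powers of the norm\<close>

lemma nn_integral_finite_geometric_cover:
  fixes f :: "'a \<Rightarrow> ennreal" and S q :: real
  assumes [measurable]: "f \<in> borel_measurable M" "\<And>k. A k \<in> sets M"
    and cover: "\<And>x. x \<in> space M \<Longrightarrow> f x \<noteq> 0 \<Longrightarrow> \<exists>k. x \<in> A k"
    and piece: "\<And>k. (\<integral>\<^sup>+x. indicator (A k) x * f x \<partial>M) \<le> ennreal (S * q ^ k)"
    and S: "0 \<le> S" and q: "0 \<le> q" "q < 1"
  shows "(\<integral>\<^sup>+x. f x \<partial>M) < \<infinity>"
proof -
  have "(\<integral>\<^sup>+x. f x \<partial>M) \<le> (\<integral>\<^sup>+x. (\<Sum>k. indicator (A k) x * f x) \<partial>M)"
  proof (rule nn_integral_mono)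
    fix x assume x: "x \<in> space M"
    show "f x \<le> (\<Sum>k. indicator (A k) x * f x)"
    proof (cases "f x = 0")
      case False
      then obtain k where "x \<in> A k" using cover[OF x] by blast
      then have "f x = (\<Sum>i\<in>{k}. indicator (A i) x * f x)" by simp
      also have "\<dots> \<le> (\<Sum>i. indicator (A i) x * f x)" by (intro sum_le_suminf) auto
      finally show ?thesis .
    qed simp
  qed
  also have "\<dots> = (\<Sum>k. \<integral>\<^sup>+x. indicator (A k) x * f x \<partial>M)"
    by (rule nn_integral_suminf) measurable
  also have "\<dots> \<le> (\<Sum>k. ennreal (S * q ^ k))"
    by (intro suminf_le piece) auto
  also have "\<dots> = ennreal (S * (1 / (1 - q)))"
    using S q by (intro suminf_ennreal_eq sums_mult geometric_sums) auto
  finally show ?thesis by (simp add: le_less_trans)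
qed

lemma ball_borel [measurable]: "ball x r \<in> sets borel"
  by simp

definition annulus :: "real \<Rightarrow> 'a::real_normed_vector set" where
  "annulus r = {x. r \<le> norm x \<and> norm x < 2 * r}"

lemma annulus_borel [measurable]: "annulus r \<in> sets borel"
  unfolding annulus_def by measurable

lemma in_dyadic_annulus:
  fixes x :: "'a::real_normed_vector"
  assumes "x \<noteq> 0"
  shows "x \<in> annulus (2 powr \<lfloor>log 2 (norm x)\<rfloor>)"
proof -
  have "2 powr \<lfloor>log 2 (norm x)\<rfloor> \<le> norm x \<and> norm x < 2 powr (\<lfloor>log 2 (norm x)\<rfloor> + 1)"
    using assms by (subst floor_log_eq_powr_iff[symmetric]) auto
  then show ?thesis by (simp add: annulus_def powr_add)
qed

lemma nn_integral_annulus_norm_powr_le: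
  fixes \<beta> r :: real
  assumes r: "r > 0"
  shows "(\<integral>\<^sup>+x. indicator (annulus r) x * ennreal (norm (x::'a::euclidean_space) powr - \<beta>) \<partial>lborel)
    \<le> ennreal (2 powr \<bar>\<beta>\<bar> * 2 ^ DIM('a) * measure lborel (ball (0::'a) 1) * r powr (DIM('a) - \<beta>))"
proof -
  have bound: "norm x powr - \<beta> \<le> 2 powr \<bar>\<beta>\<bar> * r powr - \<beta>" if x: "x \<in> annulus r" for x :: 'a
  proof (cases "\<beta> \<ge> 0")
    case True
    then have "norm x powr - \<beta> \<le> r powr - \<beta>"
      using x r by (intro powr_mono2') (auto simp: annulus_def)
    also have "\<dots> \<le> 2 powr \<bar>\<beta>\<bar> * r powr - \<beta>" by (simp add: mult_le_cancel_right1 ge_one_powr_ge_zero)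
    finally show ?thesis .
  next
    case False
    then have "norm x powr - \<beta> \<le> (2 * r) powr - \<beta>"
      using x r by (intro powr_mono2) (auto simp: annulus_def)
    then show ?thesis using False r by (simp add: powr_mult)
  qed
  have "(\<integral>\<^sup>+x. indicator (annulus r) x * ennreal (norm (x::'a) powr - \<beta>) \<partial>lborel)
      \<le> (\<integral>\<^sup>+x. ennreal (2 powr \<bar>\<beta>\<bar> * r powr - \<beta>) * indicator (ball (0::'a) (2 * r)) x \<partial>lborel)"
  proof (intro nn_integral_mono)
    fix x :: 'a
    show "indicator (annulus r) x * ennreal (norm x powr - \<beta>)
      \<le> ennreal (2 powr \<bar>\<beta>\<bar> * r powr - \<beta>) * indicator (ball 0 (2 * r)) x"
      using bound[of x] by (auto simp: indicator_def annulus_def intro: ennreal_leI)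
  qed
  also have "\<dots> = ennreal (2 powr \<bar>\<beta>\<bar> * r powr - \<beta>) * ennreal (measure lborel (ball (0::'a) (2 * r)))"
    using emeasure_lborel_ball_finite[of "0::'a" "2 * r"]
    by (simp add: nn_integral_cmult_indicator emeasure_eq_ennreal_measure)
  also have "\<dots> = ennreal (2 powr \<bar>\<beta>\<bar> * 2 ^ DIM('a) * measure lborel (ball (0::'a) 1) * r powr (DIM('a) - \<beta>))"
  proof -
    have "measure lborel (ball (0::'a) (2 * r)) = 2 ^ DIM('a) * r powr DIM('a) * measure lborel (ball (0::'a) 1)"
      using r by (simp add: content_ball_conv_unit_ball[of "2 * r"] power_mult_distrib powr_realpow)
    then have "2 powr \<bar>\<beta>\<bar> * r powr - \<beta> * measure lborel (ball (0::'a) (2 * r))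
        = 2 powr \<bar>\<beta>\<bar> * 2 ^ DIM('a) * measure lborel (ball (0::'a) 1) * (r powr - \<beta> * r powr DIM('a))"
      by (simp only: mult_ac)
    also have "r powr - \<beta> * r powr DIM('a) = r powr (DIM('a) - \<beta>)"
      by (subst powr_add[symmetric]) simp
    finally show ?thesis
      by (simp add: ennreal_mult'[symmetric])
  qed
  finally show ?thesis .
qed

lemma nn_integral_norm_powr_ball_finite:
  fixes \<beta> :: real
  assumes \<beta>: "\<beta> < DIM('a::euclidean_space)"
  shows "(\<integral>\<^sup>+x. indicator (ball 0 1) x * ennreal (norm (x::'a) powr - \<beta>) \<partial>lborel) < \<infinity>"
proof -
  define K where "K = 2 powr \<bar>\<beta>\<bar> * 2 ^ DIM('a) * measure lborel (ball (0::'a) 1)"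
  define q :: real where "q = 2 powr (\<beta> - DIM('a))"
  show ?thesis
  proof (rule nn_integral_finite_geometric_cover[where A="\<lambda>n. annulus (2 powr - real (Suc n))"])
    show "0 \<le> K * q" "0 \<le> q" by (simp_all add: K_def q_def)
    show "q < 1" using \<beta> by (simp add: q_def powr_less_one)
  next
    fix x :: 'a
    assume "indicator (ball 0 1) x * ennreal (norm x powr - \<beta>) \<noteq> 0"
    then have x: "x \<noteq> 0" "norm x < 1" by (auto simp: indicator_def)
    define k where "k = \<lfloor>log 2 (norm x)\<rfloor>"
    have "x \<in> annulus (2 powr k)" unfolding k_def using x(1) by (rule in_dyadic_annulus)
    then have "2 powr k < 2 powr 0" using x by (simp add: annulus_def)
    then have "k = - int (Suc (nat (- k - 1)))" using powr_less_cancel_iff[of 2 k 0] by simp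
    with \<open>x \<in> annulus (2 powr k)\<close> show "\<exists>n. x \<in> annulus (2 powr - real (Suc n))"
      by (metis of_int_minus of_int_of_nat_eq)
  next
    fix n :: nat
    have "(\<integral>\<^sup>+x. indicator (annulus (2 powr - real (Suc n))) x * (indicator (ball 0 1) x * ennreal (norm (x::'a) powr - \<beta>)) \<partial>lborel)
        \<le> (\<integral>\<^sup>+x. indicator (annulus (2 powr - real (Suc n))) x * ennreal (norm (x::'a) powr - \<beta>) \<partial>lborel)"
      by (intro nn_integral_mono) (auto simp: indicator_def)
    also have "\<dots> \<le> ennreal (K * (2 powr - real (Suc n)) powr (DIM('a) - \<beta>))"
      unfolding K_def by (rule nn_integral_annulus_norm_powr_le) simp
    also have "(2 powr - real (Suc n)) powr (DIM('a) - \<beta>) = q * q ^ n"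
      by (simp add: q_def powr_powr powr_realpow[symmetric] powr_add[symmetric] algebra_simps)
    finally show "(\<integral>\<^sup>+x. indicator (annulus (2 powr - real (Suc n))) x * (indicator (ball 0 1) x * ennreal (norm (x::'a) powr - \<beta>)) \<partial>lborel)
        \<le> ennreal (K * q * q ^ n)" by (simp add: mult.assoc)
  qed (auto simp: annulus_borel)
qed

lemma nn_integral_norm_powr_outside_ball_finite:
  fixes \<beta> :: real
  assumes \<beta>: "DIM('a::euclidean_space) < \<beta>"
  shows "(\<integral>\<^sup>+x. indicator (- ball 0 1) x * ennreal (norm (x::'a) powr - \<beta>) \<partial>lborel) < \<infinity>"
proof -
  define K where "K = 2 powr \<bar>\<beta>\<bar> * 2 ^ DIM('a) * measure lborel (ball (0::'a) 1)"
  define q :: real where "q = 2 powr (DIM('a) - \<beta>)"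
  show ?thesis
  proof (rule nn_integral_finite_geometric_cover[where A="\<lambda>n. annulus (2 powr real n)"])
    show "0 \<le> K" "0 \<le> q" by (simp_all add: K_def q_def)
    show "q < 1" using \<beta> by (simp add: q_def powr_less_one)
  next
    fix x :: 'a
    assume "indicator (- ball 0 1) x * ennreal (norm x powr - \<beta>) \<noteq> 0"
    then have x: "x \<noteq> 0" "1 \<le> norm x" by (auto simp: indicator_def)
    define k where "k = \<lfloor>log 2 (norm x)\<rfloor>"
    have "x \<in> annulus (2 powr k)" unfolding k_def using x(1) by (rule in_dyadic_annulus)
    then have "2 powr 0 < 2 powr (k + 1)" using x by (simp add: annulus_def powr_add)
    then have "k = int (nat k)" using powr_less_cancel_iff[of 2 0 "k + 1"] by simp
    with \<open>x \<in> annulus (2 powr k)\<close> show "\<exists>n. x \<in> annulus (2 powr real n)"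
      by (metis of_int_of_nat_eq)
  next
    fix n :: nat
    have "(\<integral>\<^sup>+x. indicator (annulus (2 powr real n)) x * (indicator (- ball 0 1) x * ennreal (norm (x::'a) powr - \<beta>)) \<partial>lborel)
        \<le> (\<integral>\<^sup>+x. indicator (annulus (2 powr real n)) x * ennreal (norm (x::'a) powr - \<beta>) \<partial>lborel)"
      by (intro nn_integral_mono) (auto simp: indicator_def)
    also have "\<dots> \<le> ennreal (K * (2 powr real n) powr (DIM('a) - \<beta>))"
      unfolding K_def by (rule nn_integral_annulus_norm_powr_le) simp
    also have "(2 powr real n) powr (DIM('a) - \<beta>) = q ^ n"
      by (simp add: q_def powr_powr powr_realpow[symmetric] algebra_simps)
    finally show "(\<integral>\<^sup>+x. indicator (annulus (2 powr real n)) x * (indicator (- ball 0 1) x * ennreal (norm (x::'a) powr - \<beta>)) \<partial>lborel)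
        \<le> ennreal (K * q ^ n)" .
  qed (auto simp: annulus_borel)
qed

lemma nn_integral_finite_if_norm_powr_bounded:
  fixes g :: "'a::euclidean_space \<Rightarrow> ennreal" and \<alpha> \<beta> A B :: real
  assumes \<alpha>\<beta>: "\<alpha> < DIM('a)" "DIM('a) < \<beta>" and AB: "0 \<le> A" "0 \<le> B"
    and near: "\<And>x. norm x < 1 \<Longrightarrow> g x \<le> ennreal (A + B * norm x powr - \<alpha>)"
    and far: "\<And>x. 1 \<le> norm x \<Longrightarrow> g x \<le> ennreal (B * norm x powr - \<beta>)"
  shows "(\<integral>\<^sup>+x. g x \<partial>lborel) < \<infinity>"
proof -
  let ?h\<^sub>0 = "\<lambda>x::'a. ennreal A * indicator (ball 0 1) x"
  let ?h\<^sub>1 = "\<lambda>x::'a. ennreal B * (indicator (ball 0 1) x * ennreal (norm x powr - \<alpha>))"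
  let ?h\<^sub>2 = "\<lambda>x::'a. ennreal B * (indicator (- ball 0 1) x * ennreal (norm x powr - \<beta>))"
  have "(\<integral>\<^sup>+x. g x \<partial>lborel) \<le> (\<integral>\<^sup>+x. ?h\<^sub>0 x + ?h\<^sub>1 x + ?h\<^sub>2 x \<partial>lborel)"
  proof (intro nn_integral_mono)
    fix x :: 'a
    show "g x \<le> ?h\<^sub>0 x + ?h\<^sub>1 x + ?h\<^sub>2 x"
    proof (cases "norm x < 1")
      case True
      then have "g x \<le> ?h\<^sub>0 x + ?h\<^sub>1 x"
        using near[of x] AB by (simp add: ennreal_plus ennreal_mult)
      then show ?thesis by (simp add: add_increasing2)
    next
      case False
      then have "g x \<le> ?h\<^sub>2 x"
        using far[of x] AB by (simp add: ennreal_mult)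
      then show ?thesis by (simp add: add_increasing)
    qed
  qed
  also have "\<dots> = (\<integral>\<^sup>+x. ?h\<^sub>0 x \<partial>lborel) + (\<integral>\<^sup>+x. ?h\<^sub>1 x \<partial>lborel) + (\<integral>\<^sup>+x. ?h\<^sub>2 x \<partial>lborel)"
    by (subst nn_integral_add; (subst nn_integral_add)?) auto
  also have "\<dots> < \<infinity>"
    using emeasure_lborel_ball_finite[of "0::'a" 1] nn_integral_norm_powr_ball_finite[OF \<alpha>\<beta>(1)]
      nn_integral_norm_powr_outside_ball_finite[OF \<alpha>\<beta>(2)]
    by (simp add: nn_integral_cmult nn_integral_cmult_indicator ennreal_mult_less_top)
  finally show ?thesis .
qed

lemma integrable_norm_powr_on_ball:
  fixes a R :: real
  assumes a: "0 \<le> a" "a < DIM('a::euclidean_space)"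
  shows "integrable lborel (\<lambda>y::'a. indicator (ball 0 R) y * norm y powr - a)"
proof (rule integrableI_bounded)
  have "(\<integral>\<^sup>+y. ennreal (norm (indicator (ball 0 R) y * norm (y::'a) powr - a)) \<partial>lborel)
      \<le> (\<integral>\<^sup>+y. indicator (ball 0 1) y * ennreal (norm y powr - a) + indicator (ball (0::'a) R) y \<partial>lborel)"
  proof (intro nn_integral_mono)
    fix y :: 'a
    have "norm y powr - a \<le> 1 powr - a" if "1 \<le> norm y"
      using that a by (intro powr_mono2') auto
    then show "ennreal (norm (indicator (ball 0 R) y * norm y powr - a))
        \<le> indicator (ball 0 1) y * ennreal (norm y powr - a) + indicator (ball (0::'a) R) y"
      by (auto simp: indicator_def)
  qed
  also have "\<dots> < \<infinity>"
    using nn_integral_norm_powr_ball_finite[OF a(2)] emeasure_lborel_ball_finite[of "0::'a" R]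
    by (subst nn_integral_add) auto
  finally show "(\<integral>\<^sup>+y. ennreal (norm (indicator (ball 0 R) y * norm (y::'a) powr - a)) \<partial>lborel) < \<infinity>" .
qed measurable

lemma powr_mult_exp_neg_powr_le:
  fixes s c q D :: real
  assumes s: "s > 0" and c: "c > 0"
  obtains K where "K > 0" "\<And>r. r \<ge> 1 \<Longrightarrow> r powr q * exp (- (c * r powr s)) \<le> K * r powr - D"
proof
  define n where "n = max 1 (nat \<lceil>(q + D) / s\<rceil>)"
  have n: "n \<ge> 1" "q + D \<le> n * s"
    using s by (auto simp: n_def pos_divide_le_eq[symmetric] intro: order_trans[OF le_of_int_ceiling])
  show "(n / c) ^ n > 0" using n c by simp
  fix r :: real assume r: "r \<ge> 1"
  define x where "x = c * r powr s"
  have x: "x \<ge> 0" using c by (simp add: x_def)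
  have "r powr (q + D) \<le> r powr (n * s)" using r n by (intro powr_mono) auto
  also have "\<dots> = (r powr s) ^ n"
    using r by (simp add: powr_realpow[symmetric] powr_powr mult.commute)
  also have "\<dots> = (n / c) ^ n * (x / n) ^ n"
    using c n by (simp add: x_def power_mult_distrib[symmetric])
  also have "\<dots> \<le> (n / c) ^ n * exp x"
  proof (rule mult_left_mono)
    have "(x / n) ^ n \<le> (1 + x / n) ^ n" using x by (intro power_mono) auto
    also have "\<dots> \<le> exp x" using n x by (intro exp_ge_one_plus_x_over_n_power_n) auto
    finally show "(x / n) ^ n \<le> exp x" .
  qed (use c in simp)
  finally have "r powr (q + D) * exp (- x) \<le> (n / c) ^ n * exp x * exp (- x)"
    by (rule mult_right_mono) simp
  also have "\<dots> = (n / c) ^ n"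
    by (simp add: mult.assoc exp_add[symmetric])
  finally have bound: "r powr (q + D) * exp (- x) \<le> (n / c) ^ n" .
  have "r powr q * exp (- x) = r powr (q + D) * exp (- x) * r powr - D"
    using r by (simp add: powr_add powr_minus field_simps)
  also have "\<dots> \<le> (n / c) ^ n * r powr - D"
    using bound by (rule mult_right_mono) simp
  finally show "r powr q * exp (- (c * r powr s)) \<le> (n / c) ^ n * r powr - D"
    unfolding x_def .
qed

lemma integrable_norm_powr_mult_exp:
  fixes q c s :: real
  assumes s: "s > 0" and c: "c > 0" and q: "- q < DIM('a::euclidean_space)"
  shows "integrable lborel (\<lambda>\<xi>::'a. norm \<xi> powr q * exp (- (c * norm \<xi> powr s)))"
proof (rule integrableI_bounded)
  obtain K where K: "K > 0"
    "\<And>r. r \<ge> 1 \<Longrightarrow> r powr q * exp (- (c * r powr s)) \<le> K * r powr - (real DIM('a) + 1)"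
    using powr_mult_exp_neg_powr_le[OF s c, where q=q and D="real DIM('a) + 1"] by blast
  show "(\<integral>\<^sup>+\<xi>. ennreal (norm (norm \<xi> powr q * exp (- (c * norm (\<xi>::'a) powr s)))) \<partial>lborel) < \<infinity>"
  proof (rule nn_integral_finite_if_norm_powr_bounded[where \<alpha>="- q" and \<beta>="real DIM('a) + 1" and A=0 and B="max 1 K"])
    fix \<xi> :: 'a
    have "norm \<xi> powr q * exp (- (c * norm \<xi> powr s)) \<le> norm \<xi> powr q"
      using c by (intro mult_left_le) auto
    also have "\<dots> = 1 * norm \<xi> powr q" by simp
    also have "\<dots> \<le> max 1 K * norm \<xi> powr q" by (intro mult_right_mono) auto
    finally show "ennreal (norm (norm \<xi> powr q * exp (- (c * norm \<xi> powr s))))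
        \<le> ennreal (0 + max 1 K * norm \<xi> powr - (- q))"
      by (intro ennreal_leI) simp
    assume "1 \<le> norm \<xi>"
    then have "norm \<xi> powr q * exp (- (c * norm \<xi> powr s)) \<le> max 1 K * norm \<xi> powr - (real DIM('a) + 1)"
      using K(2)[of "norm \<xi>"] by (simp add: order_trans[OF _ mult_right_mono])
    then show "ennreal (norm (norm \<xi> powr q * exp (- (c * norm \<xi> powr s))))
        \<le> ennreal (max 1 K * norm \<xi> powr - (real DIM('a) + 1))"
      by (intro ennreal_leI) simp
  qed (use q in auto)
qed measurable

lemma integrable_exp_neg_norm_powr:
  assumes s: "s > 0"
  shows "integrable lborel (\<lambda>\<xi>::'a::euclidean_space. exp (- (norm \<xi> powr s)))"
proof (rule integrable_cong_AE_imp)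
  show "integrable lborel (\<lambda>\<xi>::'a. norm \<xi> powr 0 * exp (- (1 * norm \<xi> powr s)))"
    using s by (intro integrable_norm_powr_mult_exp) auto
  show "AE \<xi> in lborel. norm \<xi> powr 0 * exp (- (1 * norm \<xi> powr s)) = exp (- (norm \<xi> powr s))"
    using AE_lborel_singleton[of 0] by eventually_elim simp
qed measurable

section \<open>Forward differences and the Fourier integral\<close>

fun fwd_diff :: "'a::ab_group_add \<Rightarrow> nat \<Rightarrow> ('a \<Rightarrow> 'b::ab_group_add) \<Rightarrow> 'a \<Rightarrow> 'b" where
  "fwd_diff h 0 f x = f x"
| "fwd_diff h (Suc m) f x = fwd_diff h m f (x + h) - fwd_diff h m f x"

lemma fwd_diff_Suc': "fwd_diff h (Suc m) f x = fwd_diff h m (\<lambda>y. f (y + h) - f y) x"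
  by (induction m arbitrary: x) simp_all

lemma fwd_diff_diff: "fwd_diff h m (\<lambda>y. f y - g y) x = fwd_diff h m f x - fwd_diff h m g x"
  by (induction m arbitrary: x) (simp_all add: algebra_simps)

lemma fwd_diff_const: "fwd_diff h (Suc m) (\<lambda>_. c) x = 0"
  by (induction m arbitrary: x) simp_all

lemma fwd_diff_cong:
  fixes h :: "'a::real_vector"
  assumes "\<And>k. k \<le> m \<Longrightarrow> f (x + real k *\<^sub>R h) = g (x + real k *\<^sub>R h)"
  shows "fwd_diff h m f x = fwd_diff h m g x"
  using assms
proof (induction m arbitrary: x)
  case (Suc m)
  have "fwd_diff h m f (x + h) = fwd_diff h m g (x + h)"
    using Suc.prems[of "Suc _"] by (intro Suc.IH) (simp add: algebra_simps)
  moreover have "fwd_diff h m f x = fwd_diff h m g x"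
    using Suc.prems by (intro Suc.IH) simp
  ultimately show ?case by simp
qed simp

lemma norm_fwd_diff_le:
  fixes h :: "'a::real_vector" and f :: "'a \<Rightarrow> 'b::real_normed_vector"
  assumes "\<And>k. k \<le> m \<Longrightarrow> norm (f (x + real k *\<^sub>R h)) \<le> M"
  shows "norm (fwd_diff h m f x) \<le> 2 ^ m * M"
  using assms
proof (induction m arbitrary: x)
  case (Suc m)
  have "norm (fwd_diff h m f (x + h)) \<le> 2 ^ m * M"
    using Suc.prems[of "Suc _"] by (intro Suc.IH) (simp add: algebra_simps)
  moreover have "norm (fwd_diff h m f x) \<le> 2 ^ m * M"
    using Suc.prems by (intro Suc.IH) simp
  ultimately show ?case
    using norm_triangle_ineq4[of "fwd_diff h m f (x + h)" "fwd_diff h m f x"] by simp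
qed simp

lemma fwd_diff_along_line:
  fixes \<xi> e :: "'a::real_vector"
  shows "fwd_diff (\<delta> *\<^sub>R e) m \<phi> (\<xi> + t *\<^sub>R e) = fwd_diff \<delta> m (\<lambda>t. \<phi> (\<xi> + t *\<^sub>R e)) t"
proof (induction m arbitrary: t)
  case (Suc m)
  have "\<xi> + t *\<^sub>R e + \<delta> *\<^sub>R e = \<xi> + (t + \<delta>) *\<^sub>R e" by (simp add: algebra_simps)
  then show ?case using Suc.IH[of "t + \<delta>"] Suc.IH[of t] by (simp only: fwd_diff.simps)
qed simp

lemma abs_fwd_diff_le_deriv:
  fixes G :: "nat \<Rightarrow> real \<Rightarrow> real"
  assumes \<delta>: "\<delta> \<ge> 0"
    and deriv: "\<And>k t'. k < m \<Longrightarrow> t \<le> t' \<Longrightarrow> t' \<le> t + m * \<delta> \<Longrightarrow> (G k has_real_derivative G (Suc k) t') (at t')"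
    and bound: "\<And>t'. t \<le> t' \<Longrightarrow> t' \<le> t + m * \<delta> \<Longrightarrow> \<bar>G m t'\<bar> \<le> M"
  shows "\<bar>fwd_diff \<delta> m (G 0) t\<bar> \<le> \<delta> ^ m * M"
  using deriv bound
proof (induction m arbitrary: G M)
  case (Suc m)
  define H where "H k t' = G k (t' + \<delta>) - G k t'" for k t'
  have "\<bar>fwd_diff \<delta> m (H 0) t\<bar> \<le> \<delta> ^ m * (\<delta> * M)"
  proof (rule Suc.IH)
    fix k t' assume k: "k < m" and t': "t \<le> t'" "t' \<le> t + m * \<delta>"
    have "(G k has_real_derivative G (Suc k) (t' + \<delta>)) (at (t' + \<delta>))"
      using Suc.prems(1)[of k "t' + \<delta>"] k t' \<delta> by (simp add: algebra_simps)
    then have "((\<lambda>t'. G k (t' + \<delta>)) has_real_derivative G (Suc k) (t' + \<delta>)) (at t')"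
      by (simp add: DERIV_shift)
    moreover have "(G k has_real_derivative G (Suc k) t') (at t')"
      using Suc.prems(1)[of k t'] k t' \<delta> by (simp add: algebra_simps)
    ultimately show "(H k has_real_derivative H (Suc k) t') (at t')"
      unfolding H_def by (intro DERIV_diff)
  next
    fix t' assume t': "t \<le> t'" "t' \<le> t + m * \<delta>"
    show "\<bar>H m t'\<bar> \<le> \<delta> * M"
    proof (cases "\<delta> = 0")
      case False
      then have "\<delta> > 0" using \<delta> by simp
      moreover have "\<And>y. t' \<le> y \<Longrightarrow> y \<le> t' + \<delta> \<Longrightarrow> (G m has_real_derivative G (Suc m) y) (at y)"
        using Suc.prems(1)[of m] t' by (simp add: algebra_simps)
      ultimately obtain z where z: "t' < z" "z < t' + \<delta>" "G m (t' + \<delta>) - G m t' = \<delta> * G (Suc m) z"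
        using MVT2[of t' "t' + \<delta>" "G m" "G (Suc m)"] by auto
      have "\<bar>G (Suc m) z\<bar> \<le> M" using Suc.prems(2)[of z] z t' \<delta> by (simp add: algebra_simps)
      with z(3) \<open>\<delta> > 0\<close> show ?thesis by (simp add: H_def abs_mult mult_left_mono)
    qed (simp add: H_def)
  qed
  then show ?case by (simp add: fwd_diff_Suc' H_def[abs_def] mult_ac del: fwd_diff.simps(2))
qed simp

lemma integrable_fwd_diff:
  fixes \<phi> :: "'a::euclidean_space \<Rightarrow> 'b::{banach, second_countable_topology}"
  assumes "integrable lborel \<phi>"
  shows "integrable lborel (fwd_diff h m \<phi>)"
proof (induction m)
  case (Suc m)
  then show ?case
    unfolding fwd_diff.simps[abs_def]
    by (intro Bochner_Integration.integrable_diff lborel_integrable_translate)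
qed (simp add: assms)

definition fourier_integral :: "('a::euclidean_space \<Rightarrow> real) \<Rightarrow> 'a \<Rightarrow> complex" where
  "fourier_integral \<phi> w = (\<integral>\<xi>. of_real (\<phi> \<xi>) * cis (\<xi> \<bullet> w) \<partial>lborel)"

lemma integrable_fourier_integrand:
  fixes \<phi> :: "'a::euclidean_space \<Rightarrow> real"
  assumes "integrable lborel \<phi>"
  shows "integrable lborel (\<lambda>\<xi>. of_real (\<phi> \<xi>) * cis (\<xi> \<bullet> w))"
proof (rule Bochner_Integration.integrable_bound[OF integrable_norm[OF assms]])
  have [measurable]: "\<phi> \<in> borel_measurable lborel" using assms by auto
  have [measurable]: "(\<lambda>\<xi>::'a. cis (\<xi> \<bullet> w)) \<in> borel_measurable borel"
    by (intro borel_measurable_continuous_onI continuous_intros)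
  show "(\<lambda>\<xi>. of_real (\<phi> \<xi>) * cis (\<xi> \<bullet> w)) \<in> borel_measurable lborel" by measurable
qed (simp add: norm_mult)

lemma norm_fourier_integral_le: "norm (fourier_integral \<phi> w) \<le> (\<integral>\<xi>. \<bar>\<phi> \<xi>\<bar> \<partial>lborel)"
  unfolding fourier_integral_def
  using integral_norm_bound[of lborel "\<lambda>\<xi>. of_real (\<phi> \<xi>) * cis (\<xi> \<bullet> w)"] by (simp add: norm_mult)

lemma fourier_integral_translate:
  assumes "h \<bullet> w = pi"
  shows "fourier_integral (\<lambda>\<xi>. \<phi> (\<xi> + h)) w = - fourier_integral \<phi> w"
proof -
  have "fourier_integral (\<lambda>\<xi>. \<phi> (\<xi> + h)) w
      = (\<integral>\<xi>. of_real (\<phi> (- h + 1 *\<^sub>R \<xi> + h)) * cis ((- h + 1 *\<^sub>R \<xi>) \<bullet> w) \<partial>lborel)"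
    unfolding fourier_integral_def by (subst lborel_integral_affine[of 1 _ "- h"]) simp_all
  also have "\<dots> = (\<integral>\<xi>. - (of_real (\<phi> \<xi>) * cis (\<xi> \<bullet> w)) \<partial>lborel)"
  proof -
    have "cis ((- h + 1 *\<^sub>R \<xi>) \<bullet> w) = - cis (\<xi> \<bullet> w)" for \<xi>
      using assms by (simp add: inner_simps complex_eq_iff cos_diff sin_diff)
    then show ?thesis by simp
  qed
  finally show ?thesis by (simp add: fourier_integral_def)
qed

lemma fourier_integral_fwd_diff:
  fixes \<phi> :: "'a::euclidean_space \<Rightarrow> real"
  assumes \<phi>: "integrable lborel \<phi>" and hw: "h \<bullet> w = pi"
  shows "fourier_integral (fwd_diff h m \<phi>) w = (- 2) ^ m * fourier_integral \<phi> w"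
proof (induction m)
  case (Suc m)
  have int: "integrable lborel (fwd_diff h m \<phi>)" by (rule integrable_fwd_diff[OF \<phi>])
  then have int': "integrable lborel (\<lambda>x. fwd_diff h m \<phi> (x + h))" by (rule lborel_integrable_translate)
  have "fourier_integral (fwd_diff h (Suc m) \<phi>) w
      = (\<integral>\<xi>. of_real (fwd_diff h m \<phi> (\<xi> + h)) * cis (\<xi> \<bullet> w) - of_real (fwd_diff h m \<phi> \<xi>) * cis (\<xi> \<bullet> w) \<partial>lborel)"
    by (simp add: fourier_integral_def left_diff_distrib)
  also have "\<dots> = fourier_integral (\<lambda>x. fwd_diff h m \<phi> (x + h)) w - fourier_integral (fwd_diff h m \<phi>) w"
    unfolding fourier_integral_def
    by (intro Bochner_Integration.integral_diff integrable_fourier_integrand int int')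
  also have "\<dots> = - 2 * fourier_integral (fwd_diff h m \<phi>) w"
    using fourier_integral_translate[OF hw] by simp
  also have "\<dots> = (- 2) ^ Suc m * fourier_integral \<phi> w"
    using Suc.IH by simp
  finally show ?case .
qed simp

section \<open>Directional derivatives of exp(-|\<xi>|^s)\<close>

lemma has_real_derivative_norm_along_line:
  fixes \<xi> e :: "'a::real_inner"
  assumes "\<xi> + t *\<^sub>R e \<noteq> 0"
  shows "((\<lambda>t. norm (\<xi> + t *\<^sub>R e)) has_real_derivative ((\<xi> + t *\<^sub>R e) \<bullet> e) / norm (\<xi> + t *\<^sub>R e)) (at t)"
proof -
  have "((\<lambda>t. \<xi> + t *\<^sub>R e) has_derivative (\<lambda>h. h *\<^sub>R e)) (at t)"
    by (auto intro!: derivative_eq_intros)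
  from has_derivative_compose[OF this has_derivative_norm[OF assms]]
  have "((\<lambda>t. norm (\<xi> + t *\<^sub>R e)) has_derivative (\<lambda>h. (h *\<^sub>R e) \<bullet> sgn (\<xi> + t *\<^sub>R e))) (at t)" .
  then show ?thesis
    by (simp add: has_real_derivative_iff_has_vector_derivative has_vector_derivative_def
        sgn_div_norm inner_commute divide_inverse mult_ac)
qed

text \<open>A triple (c, j, \<gamma>) encodes the term c (\<eta>\<bullet>e)^j |\<eta>|^\<gamma> exp(-|\<eta>|^s). By the product rule,
  the derivative along a unit vector e of such a term is the sum of the three terms listed by
  \<open>exp_term_deriv\<close>, so the m-th directional derivative of exp(-|\<eta>|^s) is the sum over the list
  \<open>exp_deriv_terms s m\<close>.\<close>
definition exp_term :: "real \<Rightarrow> 'a::real_inner \<Rightarrow> real \<times> nat \<times> real \<Rightarrow> 'a \<Rightarrow> real" where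
  "exp_term s e p \<eta> = (case p of (c, j, \<gamma>) \<Rightarrow> c * (\<eta> \<bullet> e) ^ j * norm \<eta> powr \<gamma> * exp (- (norm \<eta> powr s)))"

definition exp_term_deriv :: "real \<Rightarrow> real \<times> nat \<times> real \<Rightarrow> (real \<times> nat \<times> real) list" where
  "exp_term_deriv s p = (case p of (c, j, \<gamma>) \<Rightarrow>
     [(c * real j, j - 1, \<gamma>), (c * \<gamma>, Suc j, \<gamma> - 2), (- c * s, Suc j, \<gamma> + s - 2)])"

definition exp_deriv_terms :: "real \<Rightarrow> nat \<Rightarrow> (real \<times> nat \<times> real) list" where
  "exp_deriv_terms s m = ((\<lambda>L. concat (map (exp_term_deriv s) L)) ^^ m) [(1, 0, 0)]"

definition exp_dir_deriv :: "real \<Rightarrow> 'a::real_inner \<Rightarrow> nat \<Rightarrow> 'a \<Rightarrow> real" where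
  "exp_dir_deriv s e m \<eta> = (\<Sum>p\<leftarrow>exp_deriv_terms s m. exp_term s e p \<eta>)"

definition exp_deriv_coeff :: "real \<Rightarrow> nat \<Rightarrow> real" where
  "exp_deriv_coeff s m = (\<Sum>(c, j, \<gamma>)\<leftarrow>exp_deriv_terms s m. \<bar>c\<bar>)"

lemma exp_deriv_terms_Suc:
  "exp_deriv_terms s (Suc m) = concat (map (exp_term_deriv s) (exp_deriv_terms s m))"
  by (simp add: exp_deriv_terms_def)

lemma exp_dir_deriv_0: "\<eta> \<noteq> 0 \<Longrightarrow> exp_dir_deriv s e 0 \<eta> = exp (- (norm \<eta> powr s))"
  by (simp add: exp_dir_deriv_def exp_deriv_terms_def exp_term_def)

lemma exp_deriv_coeff_nonneg: "exp_deriv_coeff s m \<ge> 0"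
  unfolding exp_deriv_coeff_def by (intro sum_list_nonneg) auto

lemma has_real_derivative_exp_term:
  fixes \<xi> e :: "'a::real_inner"
  assumes e: "norm e = 1" and \<eta>: "\<xi> + t *\<^sub>R e \<noteq> 0"
  shows "((\<lambda>t. exp_term s e p (\<xi> + t *\<^sub>R e)) has_real_derivative
           (\<Sum>q\<leftarrow>exp_term_deriv s p. exp_term s e q (\<xi> + t *\<^sub>R e))) (at t)"
proof -
  obtain c j \<gamma> where p: "p = (c, j, \<gamma>)" by (cases p)
  define a where "a = (\<xi> + t *\<^sub>R e) \<bullet> e"
  define r where "r = norm (\<xi> + t *\<^sub>R e)"
  have r: "r > 0" using \<eta> by (simp add: r_def)
  have dr: "((\<lambda>t. norm (\<xi> + t *\<^sub>R e)) has_real_derivative a / r) (at t)"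
    unfolding a_def r_def by (rule has_real_derivative_norm_along_line[OF \<eta>])
  have da: "((\<lambda>t. ((\<xi> + t *\<^sub>R e) \<bullet> e) ^ j) has_real_derivative real j * a ^ (j - 1)) (at t)"
    using e by (auto intro!: derivative_eq_intros simp: a_def inner_add_left dot_square_norm)
  have dg: "((\<lambda>t. norm (\<xi> + t *\<^sub>R e) powr \<gamma>) has_real_derivative \<gamma> * r powr (\<gamma> - 1) * (a / r)) (at t)"
    using DERIV_fun_powr[OF dr, of \<gamma>] r by (simp add: r_def mult.assoc)
  have de: "((\<lambda>t. exp (- (norm (\<xi> + t *\<^sub>R e) powr s))) has_real_derivative
      exp (- (r powr s)) * (- (s * r powr (s - 1) * (a / r)))) (at t)"
    using r unfolding r_def by (auto intro!: derivative_eq_intros dr[unfolded r_def])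
  have "((\<lambda>t. exp_term s e p (\<xi> + t *\<^sub>R e)) has_real_derivative
      c * (real j * a ^ (j - 1)) * r powr \<gamma> * exp (- (r powr s))
      + c * a ^ j * (\<gamma> * r powr (\<gamma> - 1) * (a / r)) * exp (- (r powr s))
      + c * a ^ j * r powr \<gamma> * (exp (- (r powr s)) * (- (s * r powr (s - 1) * (a / r))))) (at t)"
    unfolding exp_term_def p prod.case
    by (rule DERIV_cong[OF DERIV_mult[OF DERIV_mult[OF DERIV_cmult[OF da] dg] de]])
       (simp add: a_def r_def algebra_simps)
  also have "c * (real j * a ^ (j - 1)) * r powr \<gamma> * exp (- (r powr s))
      = exp_term s e (c * real j, j - 1, \<gamma>) (\<xi> + t *\<^sub>R e)"
    by (simp add: exp_term_def a_def r_def)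
  also have "c * a ^ j * (\<gamma> * r powr (\<gamma> - 1) * (a / r)) * exp (- (r powr s))
      = exp_term s e (c * \<gamma>, Suc j, \<gamma> - 2) (\<xi> + t *\<^sub>R e)"
  proof -
    have "r powr (\<gamma> - 1) = r powr (\<gamma> - 2) * r"
      using r by (simp add: powr_diff power2_eq_square)
    then show ?thesis by (simp add: exp_term_def a_def[symmetric] r_def[symmetric] field_simps)
  qed
  also have "c * a ^ j * r powr \<gamma> * (exp (- (r powr s)) * (- (s * r powr (s - 1) * (a / r))))
      = exp_term s e (- c * s, Suc j, \<gamma> + s - 2) (\<xi> + t *\<^sub>R e)"
  proof -
    have "r powr \<gamma> * r powr (s - 1) = r powr (\<gamma> + s - 2) * r"
      using r powr_add[of r "\<gamma> + s - 2" 1] by (simp add: powr_add[symmetric] add_diff_eq)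
    then have "r powr (s - 1) = r powr (\<gamma> + s - 2) * r / r powr \<gamma>"
      using r by (simp add: field_simps)
    then show ?thesis by (simp add: exp_term_def a_def[symmetric] r_def[symmetric] field_simps)
  qed
  finally show ?thesis by (simp add: exp_term_deriv_def p add.assoc)
qed

lemma has_real_derivative_exp_dir_deriv:
  fixes \<xi> e :: "'a::real_inner"
  assumes "norm e = 1" and "\<xi> + t *\<^sub>R e \<noteq> 0"
  shows "((\<lambda>t. exp_dir_deriv s e m (\<xi> + t *\<^sub>R e)) has_real_derivative
           exp_dir_deriv s e (Suc m) (\<xi> + t *\<^sub>R e)) (at t)"
proof -
  have "((\<lambda>t. \<Sum>p\<leftarrow>L. exp_term s e p (\<xi> + t *\<^sub>R e)) has_real_derivative
      (\<Sum>p\<leftarrow>concat (map (exp_term_deriv s) L). exp_term s e p (\<xi> + t *\<^sub>R e))) (at t)" for L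
    by (induction L) (auto intro!: DERIV_add has_real_derivative_exp_term assms)
  then show ?thesis unfolding exp_dir_deriv_def exp_deriv_terms_Suc .
qed

text \<open>The lower bound s - m (rather than the trivial - m) reflects that exp(-|\<eta>|^s) = 1 - |\<eta>|^s + ...
  near the origin, and differentiation kills the constant. It is what makes the m-th derivative
  integrable near 0 after gaining the factor \<delta>^m.\<close>
lemma exp_deriv_terms_degree:
  fixes s :: real
  assumes s: "s > 0" and p: "(c, j, \<gamma>) \<in> set (exp_deriv_terms s m)" and c: "c \<noteq> 0"
  shows "real j + \<gamma> \<le> m * s \<and> (s - m \<le> real j + \<gamma> \<or> (j = 0 \<and> \<gamma> = 0))"
  using p c
proof (induction m arbitrary: c j \<gamma>)
  case 0
  then show ?case by (simp add: exp_deriv_terms_def)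
next
  case (Suc m)
  from Suc.prems obtain c' j' \<gamma>' where
    mem: "(c', j', \<gamma>') \<in> set (exp_deriv_terms s m)" and
    new: "(c, j, \<gamma>) \<in> set (exp_term_deriv s (c', j', \<gamma>'))"
    by (auto simp: exp_deriv_terms_Suc)
  have "c' \<noteq> 0" using new Suc.prems(2) by (auto simp: exp_term_deriv_def)
  with Suc.IH[OF mem] have IH: "real j' + \<gamma>' \<le> m * s" "s - m \<le> real j' + \<gamma>' \<or> (j' = 0 \<and> \<gamma>' = 0)"
    by auto
  from new consider "c = c' * real j'" "j = j' - 1" "\<gamma> = \<gamma>'"
    | "c = c' * \<gamma>'" "j = Suc j'" "\<gamma> = \<gamma>' - 2"
    | "j = Suc j'" "\<gamma> = \<gamma>' + s - 2"
    by (auto simp: exp_term_deriv_def)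
  then show ?case
  proof cases
    case 1
    then have "j' \<ge> 1" using Suc.prems(2) by (cases j') auto
    then show ?thesis using 1 IH s by (auto simp: of_nat_diff algebra_simps)
  next
    case 2
    then show ?thesis using IH s Suc.prems(2) by (auto simp: algebra_simps)
  next
    case 3
    then show ?thesis using IH s by (auto simp: algebra_simps)
  qed
qed

lemma powr_le_powr_add_powr:
  fixes r :: real
  assumes "r > 0" "a \<le> x" "x \<le> b"
  shows "r powr x \<le> r powr a + r powr b"
proof (cases "r \<le> 1")
  case True
  then have "r powr x \<le> r powr a" using assms by (intro powr_mono') auto
  then show ?thesis by (simp add: add_increasing2)
next
  case False
  then have "r powr x \<le> r powr b" using assms by (intro powr_mono) auto
  then show ?thesis by (simp add: add_increasing)
qed

lemma abs_exp_dir_deriv_le: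
  fixes e \<eta> :: "'a::real_inner" and s :: real
  assumes s: "s > 0" "s \<le> m" and e: "norm e = 1" and \<eta>: "\<eta> \<noteq> 0"
  shows "\<bar>exp_dir_deriv s e m \<eta>\<bar>
    \<le> exp_deriv_coeff s m * ((norm \<eta> powr (s - m) + norm \<eta> powr (m * s)) * exp (- (norm \<eta> powr s)))"
proof -
  define W where "W = (norm \<eta> powr (s - m) + norm \<eta> powr (m * s)) * exp (- (norm \<eta> powr s))"
  have term_bound: "\<bar>exp_term s e (c, j, \<gamma>) \<eta>\<bar> \<le> \<bar>c\<bar> * W" if "(c, j, \<gamma>) \<in> set (exp_deriv_terms s m)" for c j \<gamma>
  proof (cases "c = 0")
    case False
    have "\<bar>\<eta> \<bullet> e\<bar> \<le> norm \<eta>" using Cauchy_Schwarz_ineq2[of \<eta> e] e by simp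
    then have "\<bar>(\<eta> \<bullet> e) ^ j * norm \<eta> powr \<gamma>\<bar> \<le> norm \<eta> ^ j * norm \<eta> powr \<gamma>"
      by (simp add: abs_mult power_abs power_mono mult_right_mono)
    also have "\<dots> = norm \<eta> powr (real j + \<gamma>)"
      using \<eta> by (simp add: powr_add powr_realpow)
    also have "\<dots> \<le> norm \<eta> powr (s - m) + norm \<eta> powr (m * s)"
      using exp_deriv_terms_degree[OF s(1) that False] s \<eta> by (intro powr_le_powr_add_powr) auto
    finally show ?thesis
      by (simp add: W_def exp_term_def abs_mult mult.assoc mult_left_mono mult_right_mono)
  qed (simp add: exp_term_def)
  have "\<bar>\<Sum>p\<leftarrow>L. exp_term s e p \<eta>\<bar> \<le> (\<Sum>(c, j, \<gamma>)\<leftarrow>L. \<bar>c\<bar>) * W"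
    if "set L \<subseteq> set (exp_deriv_terms s m)" for L
    using that
  proof (induction L)
    case (Cons p L)
    obtain c j \<gamma> where p: "p = (c, j, \<gamma>)" by (cases p)
    with Cons term_bound[of c j \<gamma>] show ?case
      by (simp add: algebra_simps)
  qed simp
  then show ?thesis unfolding exp_dir_deriv_def exp_deriv_coeff_def W_def by simp
qed

section \<open>Decay of the Fourier integral of exp(-|\<xi>|^s)\<close>

lemma abs_fwd_diff_exp_near:
  fixes h \<xi> :: "'a::real_normed_vector" and s :: real
  assumes s: "s > 0" and m: "m \<ge> 1"
  shows "\<bar>fwd_diff h m (\<lambda>\<eta>. exp (- (norm \<eta> powr s))) \<xi>\<bar> \<le> 2 ^ m * (norm \<xi> + m * norm h) powr s"
proof -
  obtain m' where m': "m = Suc m'" using m by (cases m) auto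
  have "fwd_diff h m (\<lambda>\<eta>. exp (- (norm \<eta> powr s))) \<xi>
      = fwd_diff h m (\<lambda>\<eta>. exp (- (norm \<eta> powr s)) - 1) \<xi>"
    unfolding fwd_diff_diff m' fwd_diff_const by simp
  also have "\<bar>\<dots>\<bar> \<le> 2 ^ m * (norm \<xi> + m * norm h) powr s"
  proof (rule norm_fwd_diff_le[where 'b=real, unfolded real_norm_def])
    fix k assume k: "k \<le> m"
    define y where "y = norm (\<xi> + real k *\<^sub>R h) powr s"
    have "norm (\<xi> + real k *\<^sub>R h) \<le> norm \<xi> + m * norm h"
      using norm_triangle_ineq[of \<xi> "real k *\<^sub>R h"] k by (simp add: mult_right_mono order_trans)
    then have "y \<le> (norm \<xi> + m * norm h) powr s"
      unfolding y_def using s by (intro powr_mono2) auto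
    moreover have "\<bar>exp (- y) - 1\<bar> \<le> y"
      using exp_ge_add_one_self[of "- y"] by (simp add: y_def abs_if)
    ultimately show "\<bar>exp (- (norm (\<xi> + real k *\<^sub>R h) powr s)) - 1\<bar> \<le> (norm \<xi> + m * norm h) powr s"
      by (simp add: y_def)
  qed
  finally show ?thesis .
qed

lemma abs_exp_dir_deriv_le_shell:
  fixes e \<eta> :: "'a::real_inner" and s n :: real
  assumes s: "s > 0" "s \<le> m" and e: "norm e = 1"
    and n: "n > 0" "n / 2 \<le> norm \<eta>" "norm \<eta> \<le> 3 * n / 2"
  shows "\<bar>exp_dir_deriv s e m \<eta>\<bar>
    \<le> exp_deriv_coeff s m * (((n / 2) powr (s - m) + (3 * n / 2) powr (m * s)) * exp (- ((n / 2) powr s)))"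
proof -
  have "\<bar>exp_dir_deriv s e m \<eta>\<bar>
      \<le> exp_deriv_coeff s m * ((norm \<eta> powr (s - m) + norm \<eta> powr (m * s)) * exp (- (norm \<eta> powr s)))"
    using n by (intro abs_exp_dir_deriv_le s e) auto
  also have "\<dots> \<le> exp_deriv_coeff s m * (((n / 2) powr (s - m) + (3 * n / 2) powr (m * s))
      * exp (- ((n / 2) powr s)))"
  proof -
    have "norm \<eta> powr (s - m) \<le> (n / 2) powr (s - m)" using n s by (intro powr_mono2') auto
    moreover have "norm \<eta> powr (m * s) \<le> (3 * n / 2) powr (m * s)" using n s by (intro powr_mono2) auto
    moreover have "(n / 2) powr s \<le> norm \<eta> powr s" using n s by (intro powr_mono2) auto
    ultimately show ?thesis
      by (intro mult_left_mono mult_mono add_mono exp_deriv_coeff_nonneg) auto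
  qed
  finally show ?thesis .
qed

lemma abs_fwd_diff_exp_far:
  fixes e \<xi> :: "'a::real_inner" and s \<delta> :: real
  assumes s: "s > 0" "s \<le> m" and e: "norm e = 1" and \<delta>: "\<delta> > 0" and far: "2 * real m * \<delta> \<le> norm \<xi>"
  shows "\<bar>fwd_diff (\<delta> *\<^sub>R e) m (\<lambda>\<eta>. exp (- (norm \<eta> powr s))) \<xi>\<bar>
    \<le> \<delta> ^ m * (exp_deriv_coeff s m * (((norm \<xi> / 2) powr (s - m) + (3 * norm \<xi> / 2) powr (m * s))
        * exp (- ((norm \<xi> / 2) powr s))))"
proof -
  define n where "n = norm \<xi>"
  have "0 < 2 * real m * \<delta>" using s \<delta> by simp
  with far have n: "n > 0" unfolding n_def by linarith
  have segment: "n / 2 \<le> norm (\<xi> + t *\<^sub>R e) \<and> norm (\<xi> + t *\<^sub>R e) \<le> 3 * n / 2"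
    if "0 \<le> t" "t \<le> 0 + m * \<delta>" for t
    using norm_triangle_ineq[of \<xi> "t *\<^sub>R e"] norm_diff_ineq[of \<xi> "t *\<^sub>R e"] that far e
    by (simp add: n_def)
  have "fwd_diff (\<delta> *\<^sub>R e) m (\<lambda>\<eta>. exp (- (norm \<eta> powr s))) \<xi>
      = fwd_diff \<delta> m (\<lambda>t. exp (- (norm (\<xi> + t *\<^sub>R e) powr s))) 0"
    using fwd_diff_along_line[of \<delta> e m _ \<xi> 0] by simp
  also have "\<dots> = fwd_diff \<delta> m (\<lambda>t. exp_dir_deriv s e 0 (\<xi> + t *\<^sub>R e)) 0"
  proof (rule fwd_diff_cong)
    fix k assume "k \<le> m"
    then have "\<xi> + (k * \<delta>) *\<^sub>R e \<noteq> 0"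
      using segment[of "k * \<delta>"] n \<delta> by (auto simp: mult_right_mono)
    then show "exp (- (norm (\<xi> + (0 + real k *\<^sub>R \<delta>) *\<^sub>R e) powr s))
        = exp_dir_deriv s e 0 (\<xi> + (0 + real k *\<^sub>R \<delta>) *\<^sub>R e)"
      by (simp add: exp_dir_deriv_0)
  qed
  also have "\<bar>\<dots>\<bar> \<le> \<delta> ^ m * (exp_deriv_coeff s m * (((n / 2) powr (s - m) + (3 * n / 2) powr (m * s))
        * exp (- ((n / 2) powr s))))"
  proof (rule abs_fwd_diff_le_deriv[where G="\<lambda>k t. exp_dir_deriv s e k (\<xi> + t *\<^sub>R e)"])
    fix k t assume "0 \<le> t" "t \<le> 0 + m * \<delta>"
    then have "\<xi> + t *\<^sub>R e \<noteq> 0" using segment n by fastforce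
    then show "((\<lambda>t. exp_dir_deriv s e k (\<xi> + t *\<^sub>R e)) has_real_derivative
        exp_dir_deriv s e (Suc k) (\<xi> + t *\<^sub>R e)) (at t)"
      by (rule has_real_derivative_exp_dir_deriv[OF e])
  next
    fix t assume "0 \<le> t" "t \<le> 0 + m * \<delta>"
    then show "\<bar>exp_dir_deriv s e m (\<xi> + t *\<^sub>R e)\<bar> \<le> exp_deriv_coeff s m
        * (((n / 2) powr (s - m) + (3 * n / 2) powr (m * s)) * exp (- ((n / 2) powr s)))"
      using segment n by (intro abs_exp_dir_deriv_le_shell s e) auto
  qed (use \<delta> in simp)
  finally show ?thesis by (simp add: n_def)
qed

definition exp_fwd_diff_weight :: "real \<Rightarrow> nat \<Rightarrow> real \<Rightarrow> 'a::real_normed_vector \<Rightarrow> real" where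
  "exp_fwd_diff_weight s m p \<xi> = exp_deriv_coeff s m *
     (2 powr (m - s) * norm \<xi> powr (s - p) + (3 / 2) powr (m * s) * norm \<xi> powr (m * s))
     * exp (- ((norm \<xi> / 2) powr s))"

lemma exp_fwd_diff_weight_nonneg: "exp_fwd_diff_weight s m p \<xi> \<ge> 0"
  unfolding exp_fwd_diff_weight_def by (intro mult_nonneg_nonneg add_nonneg_nonneg exp_deriv_coeff_nonneg) auto

lemma integrable_exp_fwd_diff_weight:
  fixes s p :: real
  assumes s: "s > 0" and p: "p - s < DIM('a::euclidean_space)"
  shows "integrable lborel (exp_fwd_diff_weight s m p :: 'a \<Rightarrow> real)"
proof -
  let ?g = "\<lambda>q \<xi>::'a. norm \<xi> powr q * exp (- ((1 / 2) powr s * norm \<xi> powr s))"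
  have "exp_fwd_diff_weight s m p = (\<lambda>\<xi>. exp_deriv_coeff s m * 2 powr (m - s) * ?g (s - p) \<xi>
      + exp_deriv_coeff s m * (3 / 2) powr (m * s) * ?g (m * s) \<xi>)"
    by (simp add: fun_eq_iff exp_fwd_diff_weight_def powr_divide ring_distribs mult_ac)
  moreover have "0 \<le> real m * s" "0 < real DIM('a)" using s by simp_all
  then have "- (m * s) < DIM('a)" by linarith
  then have "integrable lborel (?g (s - p))" "integrable lborel (?g (m * s))"
    using s p by (auto intro!: integrable_norm_powr_mult_exp)
  ultimately show ?thesis by simp
qed

lemma exp_far_bound_le_weight:
  fixes \<xi> :: "'a::real_normed_vector" and s p \<delta> :: real
  assumes p: "p \<le> m" and \<delta>: "0 < \<delta>" "\<delta> \<le> 1" "\<delta> \<le> norm \<xi>"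
  shows "\<delta> ^ m * (exp_deriv_coeff s m * (((norm \<xi> / 2) powr (s - m) + (3 * norm \<xi> / 2) powr (m * s))
      * exp (- ((norm \<xi> / 2) powr s)))) \<le> \<delta> powr p * exp_fwd_diff_weight s m p \<xi>"
proof -
  define n where "n = norm \<xi>"
  have n: "\<delta> \<le> n" "n > 0" using \<delta> unfolding n_def by linarith+
  have "\<delta> powr m * (n / 2) powr (s - m) = 2 powr (m - s) * (n powr s * (\<delta> / n) powr m)"
    using \<delta> n by (simp add: powr_def ln_div exp_add[symmetric] algebra_simps)
  also have "\<dots> \<le> 2 powr (m - s) * (n powr s * (\<delta> / n) powr p)"
    using \<delta> n p by (intro mult_left_mono powr_mono') auto
  also have "\<dots> = \<delta> powr p * (2 powr (m - s) * n powr (s - p))"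
    using \<delta> n by (simp add: powr_def ln_div exp_add[symmetric] algebra_simps)
  finally have near: "\<delta> powr m * (n / 2) powr (s - m) \<le> \<delta> powr p * (2 powr (m - s) * n powr (s - p))" .
  have "\<delta> powr m \<le> \<delta> powr p" using \<delta> p by (intro powr_mono') auto
  moreover have "(3 * n / 2) powr (m * s) = (3 / 2) powr (m * s) * n powr (m * s)"
    using n by (simp add: powr_mult[symmetric])
  ultimately have far: "\<delta> powr m * (3 * n / 2) powr (m * s) \<le> \<delta> powr p * ((3 / 2) powr (m * s) * n powr (m * s))"
    by (simp add: mult_right_mono)
  have "\<delta> ^ m * (exp_deriv_coeff s m * (((n / 2) powr (s - m) + (3 * n / 2) powr (m * s)) * exp (- ((n / 2) powr s))))
      = exp_deriv_coeff s m * (\<delta> powr m * (n / 2) powr (s - m) + \<delta> powr m * (3 * n / 2) powr (m * s))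
        * exp (- ((n / 2) powr s))"
    using \<delta> by (simp add: powr_realpow distrib_left mult_ac)
  also have "\<dots> \<le> exp_deriv_coeff s m * (\<delta> powr p * (2 powr (m - s) * n powr (s - p))
      + \<delta> powr p * ((3 / 2) powr (m * s) * n powr (m * s))) * exp (- ((n / 2) powr s))"
    using near far by (intro mult_right_mono mult_left_mono add_mono exp_deriv_coeff_nonneg) auto
  also have "\<dots> = \<delta> powr p * exp_fwd_diff_weight s m p \<xi>"
    by (simp add: exp_fwd_diff_weight_def n_def algebra_simps)
  finally show ?thesis by (simp add: n_def)
qed

lemma abs_fwd_diff_exp_le:
  fixes e \<xi> :: "'a::real_inner" and s p \<delta> :: real
  assumes s: "s > 0" "s \<le> m" and p: "p \<le> m" and e: "norm e = 1" and \<delta>: "0 < \<delta>" "\<delta> \<le> 1"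
  shows "\<bar>fwd_diff (\<delta> *\<^sub>R e) m (\<lambda>\<eta>. exp (- (norm \<eta> powr s))) \<xi>\<bar>
    \<le> 2 ^ m * (3 * real m * \<delta>) powr s * indicator (ball 0 (2 * real m * \<delta>)) \<xi> + \<delta> powr p * exp_fwd_diff_weight s m p \<xi>"
proof -
  have "m \<ge> 1" using s by linarith
  show ?thesis
  proof (cases "norm \<xi> < 2 * real m * \<delta>")
    case True
    have "\<bar>fwd_diff (\<delta> *\<^sub>R e) m (\<lambda>\<eta>. exp (- (norm \<eta> powr s))) \<xi>\<bar> \<le> 2 ^ m * (norm \<xi> + m * \<delta>) powr s"
      using abs_fwd_diff_exp_near[OF s(1) \<open>m \<ge> 1\<close>, of "\<delta> *\<^sub>R e" \<xi>] e \<delta> by simp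
    also have "\<dots> \<le> 2 ^ m * (3 * real m * \<delta>) powr s"
      using True s \<delta> by (intro mult_left_mono powr_mono2) (auto simp: mult_ac)
    finally show ?thesis
      using True exp_fwd_diff_weight_nonneg[of s m p \<xi>] by (simp add: add_increasing2)
  next
    case False
    have "\<delta> \<le> 2 * real m * \<delta>" using \<open>m \<ge> 1\<close> \<delta> by simp
    then have "\<delta> \<le> norm \<xi>" using False by linarith
    with False show ?thesis
      using order_trans[OF abs_fwd_diff_exp_far[OF s e \<delta>(1)] exp_far_bound_le_weight[OF p \<delta>]] by simp
  qed
qed

lemma integral_abs_fwd_diff_exp_le:
  fixes s p :: real
  assumes s: "s > 0" "s \<le> m" and p: "p \<le> m" "p < s + DIM('a::euclidean_space)"
  obtains K where "\<And>\<delta> e::'a. 0 < \<delta> \<Longrightarrow> \<delta> \<le> 1 \<Longrightarrow> norm e = 1 \<Longrightarrow>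
    (\<integral>\<xi>. \<bar>fwd_diff (\<delta> *\<^sub>R e) m (\<lambda>\<eta>. exp (- (norm \<eta> powr s))) \<xi>\<bar> \<partial>lborel) \<le> K * \<delta> powr p"
proof
  define V where "V = measure lborel (ball (0::'a) 1)"
  define I where "I = (\<integral>\<xi>. exp_fwd_diff_weight s m p (\<xi>::'a) \<partial>lborel)"
  have W: "integrable lborel (exp_fwd_diff_weight s m p :: 'a \<Rightarrow> real)"
    using p by (intro integrable_exp_fwd_diff_weight s) simp
  fix \<delta> :: real and e :: 'a
  assume \<delta>: "0 < \<delta>" "\<delta> \<le> 1" and e: "norm e = 1"
  let ?ball = "ball (0::'a) (2 * real m * \<delta>)"
  have ball: "integrable lborel (indicator ?ball :: 'a \<Rightarrow> real)"
    using emeasure_lborel_ball_finite[of "0::'a"] by simp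
  have "(\<integral>\<xi>. \<bar>fwd_diff (\<delta> *\<^sub>R e) m (\<lambda>\<eta>. exp (- (norm \<eta> powr s))) \<xi>\<bar> \<partial>lborel)
      \<le> (\<integral>\<xi>. 2 ^ m * (3 * real m * \<delta>) powr s * indicator ?ball \<xi> + \<delta> powr p * exp_fwd_diff_weight s m p \<xi> \<partial>lborel)"
  proof (rule integral_mono)
    fix \<xi> :: 'a
    show "\<bar>fwd_diff (\<delta> *\<^sub>R e) m (\<lambda>\<eta>. exp (- (norm \<eta> powr s))) \<xi>\<bar>
      \<le> 2 ^ m * (3 * real m * \<delta>) powr s * indicator ?ball \<xi> + \<delta> powr p * exp_fwd_diff_weight s m p \<xi>"
      by (rule abs_fwd_diff_exp_le[OF s p(1) e \<delta>])
  qed (use s ball W in \<open>auto intro!: integrable_fwd_diff integrable_exp_neg_norm_powr\<close>)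
  also have "\<dots> = 2 ^ m * (3 * real m * \<delta>) powr s * measure lborel ?ball + \<delta> powr p * I"
    using ball W by (simp add: I_def)
  also have "\<dots> = \<delta> powr (s + DIM('a)) * (2 ^ m * (3 * real m) powr s * (2 * real m) ^ DIM('a) * V) + \<delta> powr p * I"
    using \<delta> content_ball_conv_unit_ball[of "2 * real m * \<delta>" "0::'a"]
    by (simp add: V_def powr_mult powr_add powr_realpow power_mult_distrib mult_ac)
  also have "\<dots> \<le> \<delta> powr p * (2 ^ m * (3 * real m) powr s * (2 * real m) ^ DIM('a) * V) + \<delta> powr p * I"
    using \<delta> p by (intro add_mono[OF mult_right_mono order_refl] powr_mono') (auto simp: V_def)
  finally show "(\<integral>\<xi>. \<bar>fwd_diff (\<delta> *\<^sub>R e) m (\<lambda>\<eta>. exp (- (norm \<eta> powr s))) \<xi>\<bar> \<partial>lborel)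
      \<le> (2 ^ m * (3 * real m) powr s * (2 * real m) ^ DIM('a) * V + I) * \<delta> powr p"
    by (simp add: algebra_simps)
qed

lemma norm_fourier_exp_neg_norm_powr_le:
  fixes s p :: real
  assumes s: "s > 0" and p: "p < s + DIM('a::euclidean_space)"
  obtains B where "\<And>w::'a. pi \<le> norm w \<Longrightarrow>
    norm (fourier_integral (\<lambda>\<xi>. exp (- (norm \<xi> powr s))) w) \<le> B * norm w powr - p"
proof -
  define m where "m = nat \<lceil>max p s\<rceil>"
  have m: "p \<le> m" "s \<le> m" unfolding m_def by linarith+
  obtain K where K: "\<And>\<delta> e::'a. 0 < \<delta> \<Longrightarrow> \<delta> \<le> 1 \<Longrightarrow> norm e = 1 \<Longrightarrow>
      (\<integral>\<xi>. \<bar>fwd_diff (\<delta> *\<^sub>R e) m (\<lambda>\<eta>. exp (- (norm \<eta> powr s))) \<xi>\<bar> \<partial>lborel) \<le> K * \<delta> powr p"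
    using integral_abs_fwd_diff_exp_le[OF s m(2) m(1) p] by blast
  have "norm (fourier_integral (\<lambda>\<xi>. exp (- (norm \<xi> powr s))) w) \<le> K * pi powr p / 2 ^ m * norm w powr - p"
    if w: "pi \<le> norm w" for w :: 'a
  proof -
    have "norm w > 0" using w pi_gt_zero by linarith
    define \<delta> where "\<delta> = pi / norm w"
    define e where "e = (1 / norm w) *\<^sub>R w"
    have \<delta>: "0 < \<delta>" "\<delta> \<le> 1" using w \<open>norm w > 0\<close> by (auto simp: \<delta>_def)
    have e: "norm e = 1" using \<open>norm w > 0\<close> by (simp add: e_def)
    have "(\<delta> *\<^sub>R e) \<bullet> w = pi"
      using \<open>norm w > 0\<close> by (simp add: \<delta>_def e_def dot_square_norm power2_eq_square)
    then have "2 ^ m * norm (fourier_integral (\<lambda>\<xi>. exp (- (norm \<xi> powr s))) w)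
        = norm (fourier_integral (fwd_diff (\<delta> *\<^sub>R e) m (\<lambda>\<xi>. exp (- (norm \<xi> powr s)))) w)"
      by (simp add: fourier_integral_fwd_diff integrable_exp_neg_norm_powr s norm_mult norm_power)
    also have "\<dots> \<le> K * \<delta> powr p"
      using norm_fourier_integral_le K[OF \<delta> e] by (rule order_trans)
    finally show ?thesis
      using \<open>norm w > 0\<close> by (simp add: \<delta>_def powr_divide powr_minus field_simps)
  qed
  then show thesis by (rule that)
qed

section \<open>The kernel of exp(-\<tau> \<Lambda>^s) and ancient solutions\<close>

lemma frac_kernel_1_eq:
  "frac_kernel s 1 (w::real^'n)
    = of_real (1 / (2 * pi) ^ CARD('n)) * fourier_integral (\<lambda>\<xi>. exp (- (norm \<xi> powr s))) w"
  by (simp add: frac_kernel_def fourier_integral_def)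

lemma frac_kernel_scale:
  fixes w :: "real^'n"
  assumes s: "s > 0" and \<tau>: "\<tau> > 0"
  shows "frac_kernel s \<tau> w = of_real (\<tau> powr (- CARD('n) / s)) * frac_kernel s 1 (\<tau> powr (- 1 / s) *\<^sub>R w)"
proof -
  define c where "c = \<tau> powr (- 1 / s)"
  have c: "c > 0" using \<tau> by (simp add: c_def)
  have "c powr s = \<tau> powr (- 1)"
    unfolding c_def powr_powr using s by simp
  then have "\<tau> * c powr s = 1"
    using \<tau> by (simp add: powr_minus)
  then have scale: "\<tau> * norm (c *\<^sub>R \<xi>) powr s = norm \<xi> powr s" for \<xi> :: "real^'n"
    using c by (simp add: powr_mult)
  have det: "\<bar>c\<bar> ^ CARD('n) = \<tau> powr (- CARD('n) / s)"
    using c by (simp add: c_def powr_realpow[symmetric] powr_powr)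
  have "(LINT \<xi>|lborel. of_real (exp (- \<tau> * norm \<xi> powr s)) * cis (\<xi> \<bullet> w))
      = \<bar>c\<bar> ^ CARD('n) *\<^sub>R (LINT \<xi>|lborel. of_real (exp (- \<tau> * norm (0 + c *\<^sub>R \<xi>) powr s)) * cis ((0 + c *\<^sub>R \<xi>) \<bullet> w))"
    using c by (subst lborel_integral_affine[of c _ 0]) simp_all
  also have "\<dots> = \<bar>c\<bar> ^ CARD('n) *\<^sub>R (LINT \<xi>|lborel. of_real (exp (- 1 * norm \<xi> powr s)) * cis (\<xi> \<bullet> (c *\<^sub>R w)))"
    using scale by (simp add: mult.assoc[symmetric])
  finally show ?thesis
    unfolding frac_kernel_def det c_def[symmetric] by (simp add: scaleR_conv_of_real)
qed

lemma norm_frac_kernel_le: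
  fixes w :: "real^'n"
  assumes s: "s > 0" and \<tau>: "\<tau> > 0"
  shows "norm (frac_kernel s \<tau> w)
    \<le> \<tau> powr (- CARD('n) / s) * ((\<integral>\<xi>. exp (- (norm (\<xi>::real^'n) powr s)) \<partial>lborel) / (2 * pi) ^ CARD('n))"
proof -
  have "norm (fourier_integral (\<lambda>\<xi>. exp (- (norm \<xi> powr s))) v)
      \<le> (\<integral>\<xi>. exp (- (norm (\<xi>::real^'n) powr s)) \<partial>lborel)" for v :: "real^'n"
    using norm_fourier_integral_le[of "\<lambda>\<xi>. exp (- (norm \<xi> powr s))" v] by simp
  then show ?thesis
    unfolding frac_kernel_scale[OF s \<tau>] frac_kernel_1_eq norm_mult norm_of_real
    by (simp add: mult_left_mono divide_right_mono)
qed

lemma frac_kernel_borel_measurable [measurable]: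
  "frac_kernel s \<tau> \<in> borel_measurable (borel :: (real^'n) measure)"
proof -
  have [measurable]: "cis \<in> borel_measurable borel"
    by (intro borel_measurable_continuous_onI continuous_intros)
  have "(\<lambda>(w::real^'n, \<xi>::real^'n). of_real (exp (- \<tau> * norm \<xi> powr s)) * cis (\<xi> \<bullet> w))
      \<in> borel_measurable (borel \<Otimes>\<^sub>M lborel)"
    by measurable
  then have "(\<lambda>w. LINT \<xi>|lborel. of_real (exp (- \<tau> * norm \<xi> powr s)) * cis (\<xi> \<bullet> (w::real^'n)))
      \<in> borel_measurable borel"
    by (rule lborel.borel_measurable_lebesgue_integral)
  then show ?thesis unfolding frac_kernel_def[abs_def] by measurable
qed

lemma norm_frac_kernel_1_decay:
  assumes s: "s > 0"
  obtains B where "B \<ge> 0"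
    "\<And>w::real^'n. 1 \<le> norm w \<Longrightarrow> norm (frac_kernel s 1 w) \<le> B * norm w powr - (CARD('n) + s / 2)"
proof -
  define p where "p = real CARD('n) + s / 2"
  define k where "k = 1 / (2 * pi) ^ CARD('n)"
  define A where "A = k * (\<integral>\<xi>. exp (- (norm (\<xi>::real^'n) powr s)) \<partial>lborel)"
  have A: "A \<ge> 0" "\<And>w. norm (frac_kernel s 1 (w::real^'n)) \<le> A"
    using norm_frac_kernel_le[OF s zero_less_one] by (auto simp: A_def k_def)
  have "p < s + DIM(real^'n)" using s by (simp add: p_def)
  then obtain B where B: "\<And>w::real^'n. pi \<le> norm w \<Longrightarrow>
      norm (fourier_integral (\<lambda>\<xi>. exp (- (norm \<xi> powr s))) w) \<le> B * norm w powr - p"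
    using norm_fourier_exp_neg_norm_powr_le[OF s] by blast
  define B' where "B' = k * max B 0 + A * pi powr p"
  have "norm (frac_kernel s 1 w) \<le> B' * norm w powr - p" if w: "1 \<le> norm w" for w :: "real^'n"
  proof (cases "pi \<le> norm w")
    case True
    have "norm (frac_kernel s 1 w) = k * norm (fourier_integral (\<lambda>\<xi>. exp (- (norm \<xi> powr s))) w)"
      by (simp add: frac_kernel_1_eq norm_mult norm_divide norm_power k_def)
    also have "\<dots> \<le> k * (max B 0 * norm w powr - p)"
      using B[OF True] mult_right_mono[OF max.cobounded1[of B 0], of "norm w powr - p"]
      by (intro mult_left_mono) (auto simp: k_def)
    also have "\<dots> \<le> B' * norm w powr - p"
      using A by (simp add: B'_def algebra_simps)
    finally show ?thesis .
  next
    case False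
    have "pi powr - p \<le> norm w powr - p"
      using False w s by (intro powr_mono2') (auto simp: p_def)
    then have "1 \<le> pi powr p * norm w powr - p"
      by (simp add: powr_minus field_simps)
    then have "A \<le> A * pi powr p * norm w powr - p"
      using A(1) mult_left_mono[of 1 _ A] by (simp add: mult.assoc)
    also have "\<dots> \<le> B' * norm w powr - p"
      by (intro mult_right_mono) (auto simp: B'_def k_def)
    finally show ?thesis using A(2)[of w] by linarith
  qed
  moreover have "B' \<ge> 0" using A by (simp add: B'_def k_def)
  ultimately show thesis using that by (simp add: p_def)
qed

lemma integrable_frac_kernel_1:
  assumes s: "s > 0"
  shows "integrable lborel (frac_kernel s 1 :: real^'n \<Rightarrow> complex)"
proof (rule integrableI_bounded)
  define A where "A = (\<integral>\<xi>. exp (- (norm (\<xi>::real^'n) powr s)) \<partial>lborel) / (2 * pi) ^ CARD('n)"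
  have A: "A \<ge> 0" "\<And>w. norm (frac_kernel s 1 (w::real^'n)) \<le> A"
    using norm_frac_kernel_le[OF s zero_less_one] by (auto simp: A_def)
  obtain B where B: "B \<ge> 0"
    "\<And>w::real^'n. 1 \<le> norm w \<Longrightarrow> norm (frac_kernel s 1 w) \<le> B * norm w powr - (CARD('n) + s / 2)"
    using norm_frac_kernel_1_decay[OF s] by blast
  show "(\<integral>\<^sup>+w. ennreal (norm (frac_kernel s 1 (w::real^'n))) \<partial>lborel) < \<infinity>"
  proof (rule nn_integral_finite_if_norm_powr_bounded[where \<alpha>=0 and \<beta>="CARD('n) + s / 2" and A=A and B=B])
    show "ennreal (norm (frac_kernel s 1 w)) \<le> ennreal (A + B * norm w powr - 0)" for w :: "real^'n"
      using A(2)[of w] B(1) by (intro ennreal_leI) (simp add: add_increasing2)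
    show "ennreal (norm (frac_kernel s 1 w)) \<le> ennreal (B * norm w powr - (CARD('n) + s / 2))"
      if "1 \<le> norm w" for w :: "real^'n"
      using B(2)[OF that] by (rule ennreal_leI)
  qed (use A B s in auto)
qed auto

lemma integrable_norm_frac_kernel_shift:
  fixes x :: "real^'n"
  assumes s: "s > 0" and \<tau>: "\<tau> > 0"
  shows "integrable lborel (\<lambda>y. norm (frac_kernel s \<tau> (x - y)))"
    and "(\<integral>y. norm (frac_kernel s \<tau> (x - y)) \<partial>lborel) = (\<integral>w. norm (frac_kernel s 1 (w::real^'n)) \<partial>lborel)"
proof -
  define c where "c = \<tau> powr (- 1 / s)"
  have c: "c > 0" using \<tau> by (simp add: c_def)
  have det: "\<bar>c\<bar> ^ CARD('n) = \<tau> powr (- CARD('n) / s)"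
    using c by (simp add: c_def powr_realpow[symmetric] powr_powr)
  have K: "norm (frac_kernel s \<tau> v) = \<tau> powr (- CARD('n) / s) * norm (frac_kernel s 1 (0 + c *\<^sub>R v))" for v :: "real^'n"
    by (simp add: frac_kernel_scale[OF s \<tau>] norm_mult c_def)
  have "integrable lborel (\<lambda>v::real^'n. norm (frac_kernel s 1 (0 + c *\<^sub>R v)))"
    using integrable_frac_kernel_1[OF s] c by (intro lborel_integrable_affine integrable_norm) auto
  then have int: "integrable lborel (\<lambda>v::real^'n. norm (frac_kernel s \<tau> v))"
    unfolding K by (rule integrable_mult_right)
  then show "integrable lborel (\<lambda>y. norm (frac_kernel s \<tau> (x - y)))"
    using lborel_integrable_affine[OF int, of "-1" x] by simp
  have "(\<integral>y. norm (frac_kernel s \<tau> (x - y)) \<partial>lborel) = (\<integral>v. norm (frac_kernel s \<tau> (v::real^'n)) \<partial>lborel)"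
    using lborel_integral_affine[of "-1" "\<lambda>v. norm (frac_kernel s \<tau> (v::real^'n))" x] by simp
  also have "\<dots> = \<bar>c\<bar> ^ CARD('n) * (\<integral>v. norm (frac_kernel s 1 (0 + c *\<^sub>R (v::real^'n))) \<partial>lborel)"
    unfolding K det by simp
  also have "\<dots> = (\<integral>w. norm (frac_kernel s 1 (w::real^'n)) \<partial>lborel)"
    using lborel_integral_affine[of c "\<lambda>w. norm (frac_kernel s 1 (w::real^'n))" 0] c by simp
  finally show "(\<integral>y. norm (frac_kernel s \<tau> (x - y)) \<partial>lborel) = (\<integral>w. norm (frac_kernel s 1 (w::real^'n)) \<partial>lborel)" .
qed

lemma nonpos_if_bounded_by_vanishing:
  fixes \<eta> c \<kappa> a :: real and f :: "real \<Rightarrow> real"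
  assumes \<kappa>: "\<kappa> > 0" and a: "a > 0"
    and bound: "\<And>R \<tau>. R > 0 \<Longrightarrow> \<tau> > 0 \<Longrightarrow> \<eta> \<le> f R * \<tau> powr - \<kappa> + c * R powr - a"
  shows "\<eta> \<le> 0"
proof -
  have bound_R: "\<eta> \<le> c * R powr - a" if R: "R > 0" for R
  proof (rule tendsto_le[OF trivial_limit_at_top_linorder])
    have "((\<lambda>\<tau>. \<tau> powr - \<kappa>) \<longlongrightarrow> 0) at_top"
      using \<kappa> by (intro tendsto_neg_powr filterlim_ident) auto
    from tendsto_add[OF tendsto_mult_right_zero[OF this] tendsto_const]
    show "((\<lambda>\<tau>. f R * \<tau> powr - \<kappa> + c * R powr - a) \<longlongrightarrow> c * R powr - a) at_top"
      by simp
    show "eventually (\<lambda>\<tau>. \<eta> \<le> f R * \<tau> powr - \<kappa> + c * R powr - a) at_top"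
      using bound[OF R] by (auto simp: eventually_at_top_linorder intro!: exI[of _ 1])
  qed simp
  have "((\<lambda>R. R powr - a) \<longlongrightarrow> 0) at_top"
    using a by (intro tendsto_neg_powr filterlim_ident) auto
  then have "((\<lambda>R. c * R powr - a) \<longlongrightarrow> 0) at_top"
    by (rule tendsto_mult_right_zero)
  moreover have "eventually (\<lambda>R. \<eta> \<le> c * R powr - a) at_top"
    using bound_R by (auto simp: eventually_at_top_linorder intro!: exI[of _ 1])
  ultimately show ?thesis
    by (rule tendsto_le[OF trivial_limit_at_top_linorder _ tendsto_const])
qed

lemma norm_mult_le_near_far:
  fixes k :: complex and y :: "'a::real_normed_vector" and v a C M R :: real
  assumes k: "norm k \<le> M" and v: "\<bar>v\<bar> \<le> C * norm y powr - a" and C: "C \<ge> 0" and a: "a > 0" and R: "R > 0"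
  shows "norm (k * of_real v) \<le> M * C * (indicator (ball 0 R) y * norm y powr - a) + C * R powr - a * norm k"
proof (cases "y \<in> ball 0 R")
  case True
  have "norm (k * of_real v) \<le> M * (C * norm y powr - a)"
    unfolding norm_mult norm_of_real using k v order_trans[OF norm_ge_zero k] by (intro mult_mono) auto
  then show ?thesis using True C by (simp add: mult_ac add_increasing2)
next
  case False
  have "norm y powr - a \<le> R powr - a" using False R a by (intro powr_mono2') auto
  then have vR: "\<bar>v\<bar> \<le> C * R powr - a" using order_trans[OF v mult_left_mono[OF _ C]] by blast
  have "norm (k * of_real v) \<le> C * R powr - a * norm k"
    unfolding norm_mult norm_of_real using mult_right_mono[OF vR norm_ge_zero[of k]] by (simp add: mult_ac)
  then show ?thesis using False by simp
qed

lemma ancient_solution_abs_le: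
  fixes u :: "real \<Rightarrow> real ^ 'n \<Rightarrow> real" and s a C A \<tau> R :: real
  assumes s: "s > 0" and a: "0 < a" "a < CARD('n)" and C: "C \<ge> 0"
    and anc: "ancient_solution s u"
    and decay: "\<And>t x. t \<le> 0 \<Longrightarrow> x \<noteq> 0 \<Longrightarrow> \<bar>u t x\<bar> \<le> C * norm x powr - a"
    and A: "\<And>w. norm (frac_kernel s 1 (w::real^'n)) \<le> A"
    and t\<^sub>0: "t\<^sub>0 \<le> 0" and \<tau>: "\<tau> > 0" and R: "R > 0"
  shows "\<bar>u t\<^sub>0 x\<bar> \<le> \<tau> powr (- CARD('n) / s) * A * C * (\<integral>y. indicator (ball 0 R) y * norm (y::real^'n) powr - a \<partial>lborel)
                    + C * R powr - a * (\<integral>w. norm (frac_kernel s 1 (w::real^'n)) \<partial>lborel)"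
proof -
  define t where "t = t\<^sub>0 - \<tau>"
  have t: "t < t\<^sub>0" "t \<le> 0" using \<tau> t\<^sub>0 by (auto simp: t_def)
  define M where "M = \<tau> powr (- CARD('n) / s) * A"
  define g where "g y = M * C * (indicator (ball 0 R) y * norm y powr - a)
    + C * R powr - a * norm (frac_kernel s \<tau> (x - y))" for y :: "real^'n"
  have M: "norm (frac_kernel s \<tau> v) \<le> M" for v :: "real^'n"
    unfolding frac_kernel_scale[OF s \<tau>] norm_mult M_def using A by (simp add: mult_left_mono)
  have int: "integrable lborel (\<lambda>y::real^'n. indicator (ball 0 R) y * norm y powr - a)"
    "integrable lborel (\<lambda>y. norm (frac_kernel s \<tau> (x - y)))"
    using a by (auto intro!: integrable_norm_powr_on_ball integrable_norm_frac_kernel_shift s \<tau>)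
  have "complex_of_real (u t\<^sub>0 x) = frac_semigroup s (t\<^sub>0 - t) (u t) x"
    using anc t t\<^sub>0 unfolding ancient_solution_def by blast
  then have "complex_of_real (u t\<^sub>0 x) = (\<integral>y. frac_kernel s \<tau> (x - y) * of_real (u t y) \<partial>lborel)"
    by (simp add: frac_semigroup_def t_def)
  then have "\<bar>u t\<^sub>0 x\<bar> = norm (\<integral>y. frac_kernel s \<tau> (x - y) * of_real (u t y) \<partial>lborel)"
    by (metis norm_of_real)
  also have "\<dots> \<le> (\<integral>y. norm (frac_kernel s \<tau> (x - y) * of_real (u t y)) \<partial>lborel)"
    by (rule integral_norm_bound)
  also have "\<dots> \<le> (\<integral>y. g y \<partial>lborel)"
  proof (rule integral_mono_AE')
    show "integrable lborel g"
      unfolding g_def using int by (intro Bochner_Integration.integrable_add integrable_mult_right)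
    show "AE y in lborel. 0 \<le> g y"
      using order_trans[OF norm_ge_zero M[of 0]] C
      by (auto simp: g_def indicator_def intro!: add_nonneg_nonneg mult_nonneg_nonneg)
    show "AE y in lborel. norm (frac_kernel s \<tau> (x - y) * of_real (u t y)) \<le> g y"
      using AE_lborel_singleton[of 0]
    proof eventually_elim
      case (elim y)
      show ?case unfolding g_def by (rule norm_mult_le_near_far[OF M decay[OF t(2) elim] C a(1) R])
    qed
  qed
  also have "\<dots> = \<tau> powr (- CARD('n) / s) * A * C * (\<integral>y. indicator (ball 0 R) y * norm (y::real^'n) powr - a \<partial>lborel)
      + C * R powr - a * (\<integral>w. norm (frac_kernel s 1 (w::real^'n)) \<partial>lborel)"
    unfolding g_def M_def using int integrable_norm_frac_kernel_shift(2)[OF s \<tau>, of x]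
    by (simp add: Bochner_Integration.integral_add)
  finally show ?thesis .
qed

theorem theorem5p1:
  fixes u :: "real \<Rightarrow> real ^ 'n \<Rightarrow> real"
    and s a C :: real
  assumes "s > 0" and "0 < a" and "a < real CARD('n)" and "C > 0"
    and "ancient_solution s u"
    and "\<And>t x. t \<le> 0 \<Longrightarrow> x \<noteq> 0 \<Longrightarrow> \<bar>u t x\<bar> \<le> C * norm x powr (- a)"
  shows "\<forall>t\<le>0. \<forall>x. u t x = 0"
proof (intro allI impI)
  fix t\<^sub>0 :: real and x :: "real^'n"
  assume t\<^sub>0: "t\<^sub>0 \<le> 0"
  define A where "A = (\<integral>\<xi>. exp (- (norm (\<xi>::real^'n) powr s)) \<partial>lborel) / (2 * pi) ^ CARD('n)"
  have A: "norm (frac_kernel s 1 w) \<le> A" for w :: "real^'n"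
    using norm_frac_kernel_le[OF \<open>s > 0\<close> zero_less_one, of w] by (simp add: A_def)
  have "\<bar>u t\<^sub>0 x\<bar> \<le> 0"
  proof (rule nonpos_if_bounded_by_vanishing)
    fix R \<tau> :: real assume "R > 0" "\<tau> > 0"
    from ancient_solution_abs_le[OF assms(1-3) _ assms(5,6) A t\<^sub>0 this(2,1)] assms(4)
    show "\<bar>u t\<^sub>0 x\<bar> \<le> (A * C * (\<integral>y. indicator (ball 0 R) y * norm (y::real^'n) powr - a \<partial>lborel)) * \<tau> powr - (CARD('n) / s)
        + (C * (\<integral>w. norm (frac_kernel s 1 (w::real^'n)) \<partial>lborel)) * R powr - a"
      by (simp add: mult_ac)
  qed (use assms in auto)
  then show "u t\<^sub>0 x = 0" by simp
qed

end
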